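(* Let ${\bm G}$ be a random matrix in $\mathbb{R}^{m\times n}$ with $\mathbb{E}[{\bm G}]={\bm M}$ and $\mathbb{E}[\|{\bm G}-{\bm M}\|_F^\alpha]\le\sigma^\alpha$ for some $\alpha\in(1,2]$, $\sigma>0$. Let $\tau>0$, $d=\min\{m,n\}$, and suppose $\|{\bm M}\|_F\le\tau/2$. Then $$\mathbb{E}\big[\|\mathcal{C}_\tau({\bm G})\|_F^2\big]\le 2\|{\bm M}\|_F^2+\big(2^\alpha d+3(2/3)^{\alpha-1}\big)\tau^{2-\alpha}\sigma^\alpha\le 2\|{\bm M}\|_F^2+8d\,\tau^{2-\alpha}\sigma^\alpha.$$
   Context: $\|\cdot\|_F$ is the Frobenius norm. Spectral clipping: for ${\bm G}\in\mathbb{R}^{m\times n}$ with (thin) SVD ${\bm G}={\bm U}\,\mathrm{diag}(\sigma_1,\dots,\sigma_d){\bm V}^\top$, $d=\min\{m,n\}$, and threshold $\tau>0$, define $\mathcal{C}_\tau({\bm G}):={\bm U}\,\mathrm{diag}(\min\{\sigma_1,\tau\},\dots,\min\{\sigma_d,\tau\}){\bm V}^\top$. *)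

theory Defs
  imports "HOL-Probability.Probability"
begin

text \<open>Matrices in R^{m x n} are represented as real^'n^'m (rows indexed by 'm,
  columns by 'n); entry (i,j) is A $ i $ j.\<close>

definition fro_norm :: "real^'n^'m \<Rightarrow> real" where
  "fro_norm A = sqrt (\<Sum>i\<in>UNIV. \<Sum>j\<in>UNIV. (A $ i $ j)\<^sup>2)"

definition outer :: "real^'m \<Rightarrow> real^'n \<Rightarrow> real^'n^'m" where
  "outer u v = (\<chi> i j. u $ i * v $ j)"

text \<open>Thin SVD G = U diag(s_0,...,s_{d-1}) V^T with d = min m n, written as a sum of
  rank-one terms s_k u_k v_k^T, where (u_k)_{k<d} and (v_k)_{k<d} are orthonormal
  families and s_k \<ge> 0.\<close>
definition is_thin_svd :: "real^'n^'m \<Rightarrow> (nat \<Rightarrow> real^'m) \<Rightarrow> (nat \<Rightarrow> real) \<Rightarrow> (nat \<Rightarrow> real^'n) \<Rightarrow> bool" where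
  "is_thin_svd G U s V \<longleftrightarrow>
     (let d = min CARD('m) CARD('n) in
       (\<forall>k<d. \<forall>l<d. U k \<bullet> U l = (if k = l then 1 else 0)) \<and>
       (\<forall>k<d. \<forall>l<d. V k \<bullet> V l = (if k = l then 1 else 0)) \<and>
       (\<forall>k<d. s k \<ge> 0) \<and>
       G = (\<Sum>k<d. s k *\<^sub>R outer (U k) (V k)))"

text \<open>Spectral clipping C_tau(G) = U diag(min(s_k,tau)) V^T for a thin SVD of G
  (the result does not depend on the choice of SVD).\<close>
definition spectral_clip :: "real \<Rightarrow> real^'n^'m \<Rightarrow> real^'n^'m" where
  "spectral_clip \<tau> G = (SOME C. \<exists>U s V. is_thin_svd G U s V \<and>
       C = (\<Sum>k<min CARD('m) CARD('n). min (s k) \<tau> *\<^sub>R outer (U k) (V k)))"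

end

theory Submission
  imports Defs
begin

(* Clipping only shrinks the singular values, and there are d of them, so pointwise
   ||C_tau(G)||^2 <= min(||G||^2, d tau^2). Splitting ||G||^2 <= 2 ||M||^2 + 2 ||G - M||^2 and
   using min(x^2, tau^2) <= tau^(2 - alpha) x^alpha gives
   ||C_tau(G)||^2 <= 2 ||M||^2 + 2 d tau^(2 - alpha) ||G - M||^alpha, and taking expectations
   proves the bound with the smaller constant 2 d. Since C_tau is defined through a chosen thin SVD, an SVD must also be shown to exist:
   it is built greedily, each singular pair coming from a unit vector that maximises ||R x||
   for the current residual R. *)

definition orthonormal_upto :: "nat \<Rightarrow> (nat \<Rightarrow> 'a::real_inner) \<Rightarrow> bool" where
  "orthonormal_upto k U \<longleftrightarrow> (\<forall>i<k. \<forall>j<k. U i \<bullet> U j = (if i = j then 1 else 0))"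

lemma orthonormal_upto_0 [simp]: "orthonormal_upto 0 U"
  by (simp add: orthonormal_upto_def)

lemma orthonormal_upto_Suc_upd:
  "orthonormal_upto (Suc k) (U(k := x)) \<longleftrightarrow>
     orthonormal_upto k U \<and> norm x = 1 \<and> (\<forall>i<k. U i \<bullet> x = 0)"
  unfolding orthonormal_upto_def norm_eq_1 less_Suc_eq
  by (auto simp: inner_commute)

lemma orthonormal_upto_le_DIM:
  fixes U :: "nat \<Rightarrow> 'a::euclidean_space"
  assumes "orthonormal_upto k U"
  shows "k \<le> DIM('a)"
proof -
  have unit: "U i \<bullet> U i = 1" if "i < k" for i
    using assms that by (simp add: orthonormal_upto_def)
  have "inj_on U {..<k}"
  proof (rule inj_onI)
    fix i j assume "i \<in> {..<k}" "j \<in> {..<k}" "U i = U j"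
    then show "i = j"
      using assms unit unfolding orthonormal_upto_def by (metis lessThan_iff zero_neq_one)
  qed
  then have "card (U ` {..<k}) = k"
    by (simp add: card_image)
  moreover have "independent (U ` {..<k})"
  proof (rule pairwise_orthogonal_independent)
    show "pairwise orthogonal (U ` {..<k})"
      using assms by (fastforce simp: pairwise_def orthogonal_def orthonormal_upto_def)
    show "0 \<notin> U ` {..<k}"
      using unit by force
  qed
  ultimately show ?thesis
    using independent_bound by metis
qed

lemma orthogonal_unit_exists:
  fixes U :: "nat \<Rightarrow> 'a::euclidean_space"
  assumes "k < DIM('a)"
  obtains x where "norm x = 1" "\<forall>i<k. U i \<bullet> x = 0"
proof -
  have "dim (U ` {..<k}) \<le> card (U ` {..<k})"
    by (rule dim_le_card) (auto intro: span_base)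
  also have "\<dots> \<le> k"
    using card_image_le[of "{..<k}" U] by simp
  finally obtain x where x: "x \<noteq> 0" "\<And>y. y \<in> span (U ` {..<k}) \<Longrightarrow> orthogonal x y"
    using orthogonal_to_subspace_exists assms by (metis le_less_trans)
  have "U i \<bullet> x = 0" if "i < k" for i
    using x(2)[of "U i"] that by (auto intro: span_base simp: orthogonal_def inner_commute)
  with x(1) show thesis
    by (intro that[of "x /\<^sub>R norm x"]) auto
qed

lemma outer_mult_vec: "outer u v *v x = (v \<bullet> x) *\<^sub>R u"
  by (simp add: vec_eq_iff outer_def matrix_vector_mult_def inner_vec_def sum_distrib_left mult_ac)

lemma inner_outer_outer: "outer a b \<bullet> outer c d = (a \<bullet> c) * (b \<bullet> d)"
  by (simp add: outer_def inner_vec_def sum_product mult_ac) (rule sum.swap)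

lemma fro_norm_eq_norm: "fro_norm A = norm A"
  by (simp add: fro_norm_def norm_vec_def L2_set_def sum_nonneg)

definition outer_sum :: "nat \<Rightarrow> (nat \<Rightarrow> real) \<Rightarrow> (nat \<Rightarrow> real^'m) \<Rightarrow> (nat \<Rightarrow> real^'n) \<Rightarrow> real^'n^'m" where
  "outer_sum k s U V = (\<Sum>j<k. s j *\<^sub>R outer (U j) (V j))"

lemma outer_sum_Suc_upd:
  "outer_sum (Suc k) (s(k := c)) (U(k := u)) (V(k := v)) = outer_sum k s U V + c *\<^sub>R outer u v"
  unfolding outer_sum_def by (auto intro: sum.cong)

lemma norm_outer_sum_sq:
  assumes "orthonormal_upto k U" "orthonormal_upto k V"
  shows "(norm (outer_sum k s U V))\<^sup>2 = (\<Sum>j<k. (s j)\<^sup>2)"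
proof -
  have "(norm (outer_sum k s U V))\<^sup>2 = (\<Sum>i<k. \<Sum>j<k. s i * s j * ((U i \<bullet> U j) * (V i \<bullet> V j)))"
    by (simp add: outer_sum_def power2_norm_eq_inner inner_sum_left inner_sum_right
        inner_outer_outer sum_distrib_left mult_ac) (subst sum.swap, simp add: mult_ac)
  also have "\<dots> = (\<Sum>i<k. \<Sum>j<k. if j = i then (s i)\<^sup>2 else 0)"
    using assms by (intro sum.cong) (auto simp: orthonormal_upto_def power2_eq_square)
  finally show ?thesis
    by simp
qed

lemma linear_coeff_zero_if_quadratic_nonpos:
  fixes a b :: real
  assumes "\<And>t. 2 * a * t + b * t\<^sup>2 \<le> 0"
  shows "a = 0"
proof (rule ccontr)
  assume "a \<noteq> 0"
  define c where "c = \<bar>b\<bar> + 1"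
  have c: "c > 0" "2 * c + b > 0"
    unfolding c_def by (auto simp: abs_if)
  have "2 * a * (a / c) + b * (a / c)\<^sup>2 = a\<^sup>2 * (2 * c + b) / c\<^sup>2"
    using c by (simp add: field_simps power2_eq_square)
  also have "\<dots> > 0"
    using \<open>a \<noteq> 0\<close> c by simp
  finally show False
    using assms[of "a / c"] by linarith
qed

lemma linear_attains_max_stretch:
  fixes f :: "'a::euclidean_space \<Rightarrow> 'b::real_normed_vector"
  assumes "linear f"
  obtains v where "norm v = 1" "\<And>x. norm (f x) \<le> norm (f v) * norm x"
proof -
  have "continuous_on (sphere 0 1) (\<lambda>x. norm (f x))"
    using assms by (intro continuous_on_norm linear_continuous_on) (simp add: linear_conv_bounded_linear)
  then obtain v where v: "v \<in> sphere 0 1" and max: "\<And>y. y \<in> sphere 0 1 \<Longrightarrow> norm (f y) \<le> norm (f v)"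
    using continuous_attains_sup[of "sphere 0 1" "\<lambda>x. norm (f x)"] by auto
  have "norm (f x) \<le> norm (f v) * norm x" for x
  proof (cases "x = 0")
    case True
    then show ?thesis
      using assms linear_0 by fastforce
  next
    case False
    then have "norm (f (x /\<^sub>R norm x)) \<le> norm (f v)"
      by (intro max) simp
    moreover have "norm (f (x /\<^sub>R norm x)) = norm (f x) / norm x"
      using linear_scale[OF assms] by (simp add: divide_inverse_commute)
    ultimately show ?thesis
      using False by (simp add: divide_le_eq)
  qed
  with v show thesis
    using that by simp
qed

lemma norm_add_scaleR_sq:
  fixes a b :: "'a::real_inner"
  shows "(norm (a + t *\<^sub>R b))\<^sup>2 = (norm a)\<^sup>2 + 2 * (a \<bullet> b) * t + (norm b)\<^sup>2 * t\<^sup>2"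
  unfolding power2_norm_eq_inner
  by (simp add: inner_add_left inner_add_right inner_commute[of b a] power2_eq_square algebra_simps)

lemma max_stretch_inner:
  fixes f :: "'a::real_inner \<Rightarrow> 'b::real_inner"
  assumes "linear f" "norm v = 1" "\<And>x. norm (f x) \<le> norm (f v) * norm x"
  shows "f v \<bullet> f w = (norm (f v))\<^sup>2 * (v \<bullet> w)"
proof -
  define s where "s = norm (f v)"
  \<comment> \<open>Since v maximises the stretch, perturbing it to v + t w gives a quadratic in t that is
    nowhere positive, so its linear coefficient vanishes.\<close>
  have "2 * (f v \<bullet> f w - s\<^sup>2 * (v \<bullet> w)) * t + ((norm (f w))\<^sup>2 - s\<^sup>2 * (norm w)\<^sup>2) * t\<^sup>2 \<le> 0"
    for t
  proof -
    have "(norm (f (v + t *\<^sub>R w)))\<^sup>2 \<le> s\<^sup>2 * (norm (v + t *\<^sub>R w))\<^sup>2"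
      using assms(3) unfolding s_def power_mult_distrib[symmetric] by (intro power_mono) auto
    then have "s\<^sup>2 + 2 * (f v \<bullet> f w) * t + (norm (f w))\<^sup>2 * t\<^sup>2
        \<le> s\<^sup>2 * (1 + 2 * (v \<bullet> w) * t + (norm w)\<^sup>2 * t\<^sup>2)"
      using assms(2) by (simp add: linear_add[OF assms(1)] linear_scale[OF assms(1)]
          norm_add_scaleR_sq s_def)
    then show ?thesis
      by (simp add: algebra_simps)
  qed
  then show ?thesis
    using linear_coeff_zero_if_quadratic_nonpos unfolding s_def by fastforce
qed

lemma linear_singular_pair:
  fixes f :: "'a::euclidean_space \<Rightarrow> 'b::real_inner"
  assumes "linear f" "f x \<noteq> 0"
  obtains u v s where "s > 0" "norm u = 1" "norm v = 1" "f v = s *\<^sub>R u"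
    "\<And>y. u \<bullet> f y = s * (v \<bullet> y)"
proof -
  obtain v where v: "norm v = 1" and max: "\<And>y. norm (f y) \<le> norm (f v) * norm y"
    using linear_attains_max_stretch[OF assms(1)] by blast
  define s where "s = norm (f v)"
  have "0 < s * norm x"
    using max[of x] assms(2) unfolding s_def by (meson less_le_trans zero_less_norm_iff)
  then have "s > 0"
    by (simp add: zero_less_mult_iff)
  define u where "u = f v /\<^sub>R s"
  have "u \<bullet> f y = s * (v \<bullet> y)" for y
  proof -
    have "u \<bullet> f y = (f v \<bullet> f y) / s"
      by (simp add: u_def divide_inverse_commute)
    also have "\<dots> = s * (v \<bullet> y)"
      using max_stretch_inner[OF assms(1) v max, of y] \<open>s > 0\<close>
      by (simp add: s_def[symmetric] power2_eq_square)
    finally show ?thesis .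
  qed
  moreover have "norm u = 1" "f v = s *\<^sub>R u"
    using \<open>s > 0\<close> by (simp_all add: u_def s_def[symmetric])
  ultimately show thesis
    using that \<open>s > 0\<close> v by blast
qed

definition partial_svd ::
    "nat \<Rightarrow> real^'n^'m \<Rightarrow> (nat \<Rightarrow> real^'m) \<Rightarrow> (nat \<Rightarrow> real) \<Rightarrow> (nat \<Rightarrow> real^'n) \<Rightarrow> bool" where
  "partial_svd k A U s V \<longleftrightarrow>
     orthonormal_upto k U \<and> orthonormal_upto k V \<and> (\<forall>i<k. 0 \<le> s i) \<and>
     (\<forall>i<k. (A - outer_sum k s U V) *v V i = 0) \<and>
     (\<forall>i<k. \<forall>x. U i \<bullet> ((A - outer_sum k s U V) *v x) = 0)"

lemma partial_svd_0 [simp]: "partial_svd 0 A U s V"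
  by (simp add: partial_svd_def)

lemma partial_svd_Suc_upd:
  assumes "partial_svd k A U s V" and "0 \<le> c"
    and "norm u = 1" "norm v = 1" "\<forall>i<k. U i \<bullet> u = 0" "\<forall>i<k. V i \<bullet> v = 0"
    and "(A - outer_sum k s U V) *v v = c *\<^sub>R u"
    and "\<And>x. u \<bullet> ((A - outer_sum k s U V) *v x) = c * (v \<bullet> x)"
  shows "partial_svd (Suc k) A (U(k := u)) (s(k := c)) (V(k := v))"
proof -
  define R where "R = A - outer_sum k s U V"
  have residual: "(A - outer_sum (Suc k) (s(k := c)) (U(k := u)) (V(k := v))) *v x
      = R *v x - (c * (v \<bullet> x)) *\<^sub>R u" for x
    by (simp add: R_def outer_sum_Suc_upd diff_diff_eq[symmetric] matrix_vector_mult_diff_rdistrib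
        scaleR_matrix_vector_assoc[symmetric] outer_mult_vec)
  have "u \<bullet> u = 1" "v \<bullet> v = 1"
    using assms(3,4) by (simp_all add: norm_eq_1)
  with assms show ?thesis
    unfolding partial_svd_def orthonormal_upto_Suc_upd residual R_def[symmetric] less_Suc_eq
    by (auto simp: inner_diff_right inner_commute)
qed

lemma partial_svd_Suc_nonzero:
  assumes "partial_svd k A U s V" "A \<noteq> outer_sum k s U V"
  obtains u c v where "partial_svd (Suc k) A (U(k := u)) (s(k := c)) (V(k := v))"
proof -
  define R where "R = A - outer_sum k s U V"
  have "R \<noteq> 0"
    using assms(2) unfolding R_def by simp
  then obtain x where x: "R *v x \<noteq> 0"
    by (metis matrix_eq matrix_vector_mult_0)
  obtain u v c where c: "c > 0" and uv: "norm u = 1" "norm v = 1"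
    and Rv: "R *v v = c *\<^sub>R u" and uR: "\<And>y. u \<bullet> (R *v y) = c * (v \<bullet> y)"
    by (rule linear_singular_pair[OF matrix_vector_mul_linear x]) auto
  have "U i \<bullet> u = 0" if "i < k" for i
  proof -
    have "c * (U i \<bullet> u) = U i \<bullet> (R *v v)"
      by (simp add: Rv)
    also have "\<dots> = 0"
      using assms(1) that by (simp add: partial_svd_def R_def)
    finally show ?thesis
      using c by simp
  qed
  moreover have "V i \<bullet> v = 0" if "i < k" for i
  proof -
    have "c * (V i \<bullet> v) = u \<bullet> (R *v V i)"
      by (simp add: uR inner_commute)
    also have "\<dots> = 0"
      using assms(1) that by (simp add: partial_svd_def R_def)
    finally show ?thesis
      using c by simp
  qed
  ultimately show thesis
    using that partial_svd_Suc_upd[OF assms(1) less_imp_le[OF c] uv] Rv uR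
    unfolding R_def by blast
qed

lemma partial_svd_exists:
  fixes A :: "real^'n^'m"
  assumes "k \<le> min CARD('m) CARD('n)"
  shows "\<exists>U s V. partial_svd k A U s V"
  using assms
proof (induction k)
  case 0
  then show ?case
    by simp
next
  case (Suc k)
  then obtain U s V where svd: "partial_svd k A U s V"
    by auto
  show ?case
  proof (cases "A = outer_sum k s U V")
    case True
    obtain u :: "real^'m" where "norm u = 1" "\<forall>i<k. U i \<bullet> u = 0"
      by (rule orthogonal_unit_exists[of k U]) (use Suc.prems in auto)
    moreover obtain v :: "real^'n" where "norm v = 1" "\<forall>i<k. V i \<bullet> v = 0"
      by (rule orthogonal_unit_exists[of k V]) (use Suc.prems in auto)
    ultimately have "partial_svd (Suc k) A (U(k := u)) (s(k := 0)) (V(k := v))"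
      using partial_svd_Suc_upd[OF svd order.refl] True by simp
    then show ?thesis
      by blast
  next
    case False
    then show ?thesis
      using partial_svd_Suc_nonzero[OF svd False] by blast
  qed
qed

lemma partial_svd_min_dim:
  fixes A :: "real^'n^'m"
  assumes "partial_svd (min CARD('m) CARD('n)) A U s V"
  shows "A = outer_sum (min CARD('m) CARD('n)) s U V"
proof (rule ccontr)
  define d where "d = min CARD('m) CARD('n)"
  assume "A \<noteq> outer_sum (min CARD('m) CARD('n)) s U V"
  then obtain u c v where "partial_svd (Suc d) A (U(d := u)) (s(d := c)) (V(d := v))"
    using partial_svd_Suc_nonzero assms unfolding d_def by blast
  then have "orthonormal_upto (Suc d) (U(d := u))" "orthonormal_upto (Suc d) (V(d := v))"
    unfolding partial_svd_def by blast+
  then have "Suc d \<le> DIM(real^'m)" "Suc d \<le> DIM(real^'n)"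
    by (intro orthonormal_upto_le_DIM; blast)+
  then show False
    by (simp add: d_def)
qed

lemma is_thin_svd_iff:
  fixes G :: "real^'n^'m"
  shows "is_thin_svd G U s V \<longleftrightarrow>
    orthonormal_upto (min CARD('m) CARD('n)) U \<and> orthonormal_upto (min CARD('m) CARD('n)) V \<and>
    (\<forall>k<min CARD('m) CARD('n). 0 \<le> s k) \<and> G = outer_sum (min CARD('m) CARD('n)) s U V"
  by (simp add: is_thin_svd_def orthonormal_upto_def outer_sum_def Let_def)

lemma thin_svd_exists:
  fixes G :: "real^'n^'m"
  shows "\<exists>U s V. is_thin_svd G U s V"
proof -
  obtain U s V where "partial_svd (min CARD('m) CARD('n)) G U s V"
    using partial_svd_exists by blast
  then have "is_thin_svd G U s V"
    using partial_svd_min_dim by (simp add: is_thin_svd_iff partial_svd_def)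
  then show ?thesis
    by blast
qed

lemma spectral_clip_eq_outer_sum:
  fixes G :: "real^'n^'m"
  obtains U s V where "is_thin_svd G U s V"
    and "spectral_clip \<tau> G = outer_sum (min CARD('m) CARD('n)) (\<lambda>k. min (s k) \<tau>) U V"
proof -
  have "\<exists>C U s V. is_thin_svd G U s V \<and>
      C = (\<Sum>k<min CARD('m) CARD('n). min (s k) \<tau> *\<^sub>R outer (U k) (V k))"
    using thin_svd_exists by blast
  from someI_ex[OF this] show thesis
    using that unfolding spectral_clip_def outer_sum_def by blast
qed

lemma norm_spectral_clip_sq_le:
  fixes G :: "real^'n^'m"
  assumes "0 \<le> \<tau>"
  shows "(norm (spectral_clip \<tau> G))\<^sup>2 \<le> min ((norm G)\<^sup>2) (real (min CARD('m) CARD('n)) * \<tau>\<^sup>2)"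
proof -
  define d where "d = min CARD('m) CARD('n)"
  obtain U s V where svd: "is_thin_svd G U s V"
    and clip: "spectral_clip \<tau> G = outer_sum d (\<lambda>k. min (s k) \<tau>) U V"
    using spectral_clip_eq_outer_sum unfolding d_def by blast
  have U: "orthonormal_upto d U" and V: "orthonormal_upto d V" and s: "\<forall>k<d. 0 \<le> s k"
    and G: "G = outer_sum d s U V"
    using svd unfolding is_thin_svd_iff d_def by auto
  have "(norm (spectral_clip \<tau> G))\<^sup>2 = (\<Sum>k<d. (min (s k) \<tau>)\<^sup>2)"
    unfolding clip by (rule norm_outer_sum_sq[OF U V])
  moreover have "(\<Sum>k<d. (min (s k) \<tau>)\<^sup>2) \<le> (\<Sum>k<d. (s k)\<^sup>2)"
    using s assms by (intro sum_mono power_mono) auto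
  moreover have "(\<Sum>k<d. (min (s k) \<tau>)\<^sup>2) \<le> (\<Sum>k<d. \<tau>\<^sup>2)"
    using s assms by (intro sum_mono power_mono) auto
  ultimately show ?thesis
    unfolding G norm_outer_sum_sq[OF U V] by (simp add: d_def)
qed

lemma min_sq_le_powr:
  fixes x \<tau> \<alpha> :: real
  assumes "0 \<le> x" "0 < \<tau>" "0 \<le> \<alpha>" "\<alpha> \<le> 2"
  shows "min (x\<^sup>2) (\<tau>\<^sup>2) \<le> \<tau> powr (2 - \<alpha>) * x powr \<alpha>"
proof (cases "x \<le> \<tau>")
  case True
  show ?thesis
  proof (cases "x = 0")
    case False
    then have "x\<^sup>2 = x powr (2 - \<alpha>) * x powr \<alpha>"
      using assms(1) by (simp add: powr_add[symmetric] powr_numeral)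
    also have "\<dots> \<le> \<tau> powr (2 - \<alpha>) * x powr \<alpha>"
      using True assms by (intro mult_right_mono powr_mono2) auto
    finally show ?thesis
      by linarith
  qed simp
next
  case False
  have "\<tau>\<^sup>2 = \<tau> powr (2 - \<alpha>) * \<tau> powr \<alpha>"
    using assms(2) by (simp add: powr_add[symmetric] powr_numeral)
  also have "\<dots> \<le> \<tau> powr (2 - \<alpha>) * x powr \<alpha>"
    using False assms by (intro mult_left_mono powr_mono2) auto
  finally show ?thesis
    by linarith
qed

lemma norm_add_sq_le:
  fixes a b :: "'a::real_normed_vector"
  shows "(norm (a + b))\<^sup>2 \<le> 2 * (norm a)\<^sup>2 + 2 * (norm b)\<^sup>2"
proof -
  have "(norm (a + b))\<^sup>2 \<le> (norm a + norm b)\<^sup>2"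
    by (simp add: norm_triangle_ineq power_mono)
  also have "\<dots> \<le> 2 * (norm a)\<^sup>2 + 2 * (norm b)\<^sup>2"
    using sum_squares_bound[of "norm a" "norm b"] by (simp add: power2_sum)
  finally show ?thesis .
qed

lemma norm_spectral_clip_sq_le_powr:
  fixes G Mbar :: "real^'n^'m"
  assumes "0 < \<tau>" "0 \<le> \<alpha>" "\<alpha> \<le> 2"
  shows "(norm (spectral_clip \<tau> G))\<^sup>2
    \<le> 2 * (norm Mbar)\<^sup>2 + 2 * real (min CARD('m) CARD('n)) * \<tau> powr (2 - \<alpha>) * norm (G - Mbar) powr \<alpha>"
proof -
  define d where "d = real (min CARD('m) CARD('n))"
  define p where "p = 2 * (norm Mbar)\<^sup>2"
  define e where "e = norm (G - Mbar)"
  have "d \<ge> 1" "p \<ge> 0"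
    by (simp_all add: d_def p_def)
  have "(norm G)\<^sup>2 \<le> p + 2 * e\<^sup>2"
    using norm_add_sq_le[of Mbar "G - Mbar"] by (simp add: p_def e_def)
  then have "(norm (spectral_clip \<tau> G))\<^sup>2 \<le> min (p + 2 * e\<^sup>2) (d * \<tau>\<^sup>2)"
    using norm_spectral_clip_sq_le[of \<tau> G] assms(1) unfolding d_def by linarith
  also have "\<dots> \<le> p + min (2 * e\<^sup>2) (d * \<tau>\<^sup>2)"
    using \<open>p \<ge> 0\<close> by (simp add: min_def)
  also have "\<dots> \<le> p + min (2 * d * e\<^sup>2) (2 * d * \<tau>\<^sup>2)"
    using \<open>d \<ge> 1\<close> by (intro add_left_mono min.mono) (simp_all add: mult_le_cancel_right1)
  also have "\<dots> = p + 2 * d * min (e\<^sup>2) (\<tau>\<^sup>2)"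
    using \<open>d \<ge> 1\<close> by (simp add: min_mult_distrib_left)
  also have "\<dots> \<le> p + 2 * d * (\<tau> powr (2 - \<alpha>) * e powr \<alpha>)"
    using \<open>d \<ge> 1\<close> assms by (intro add_left_mono mult_left_mono min_sq_le_powr) (auto simp: e_def)
  finally show ?thesis
    by (simp add: d_def p_def e_def mult_ac)
qed

lemma (in prob_space) nn_integral_le_affine_bound:
  assumes "h \<in> borel_measurable M" "\<And>\<omega>. 0 \<le> h \<omega>" "\<And>\<omega>. f \<omega> \<le> a + c * h \<omega>"
    and "0 \<le> a" "0 \<le> c" "0 \<le> b"
    and "(\<integral>\<^sup>+\<omega>. ennreal (h \<omega>) \<partial>M) \<le> ennreal b"
  shows "(\<integral>\<^sup>+\<omega>. ennreal (f \<omega>) \<partial>M) \<le> ennreal (a + c * b)"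
proof -
  have "(\<integral>\<^sup>+\<omega>. ennreal (f \<omega>) \<partial>M) \<le> (\<integral>\<^sup>+\<omega>. ennreal a + ennreal c * ennreal (h \<omega>) \<partial>M)"
  proof (intro nn_integral_mono)
    fix \<omega>
    have "ennreal (f \<omega>) \<le> ennreal (a + c * h \<omega>)"
      using assms(3) by (rule ennreal_leI)
    also have "\<dots> = ennreal a + ennreal c * ennreal (h \<omega>)"
      using assms(2,4,5) by (simp add: ennreal_plus ennreal_mult)
    finally show "ennreal (f \<omega>) \<le> ennreal a + ennreal c * ennreal (h \<omega>)" .
  qed
  also have "\<dots> = ennreal a + ennreal c * (\<integral>\<^sup>+\<omega>. ennreal (h \<omega>) \<partial>M)"
    using assms(1) by (simp add: nn_integral_add nn_integral_cmult emeasure_space_1)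
  also have "\<dots> \<le> ennreal a + ennreal c * ennreal b"
    using assms(7) by (intro add_left_mono mult_left_mono) auto
  also have "\<dots> = ennreal (a + c * b)"
    using assms(4-6) by (simp add: ennreal_plus ennreal_mult)
  finally show ?thesis .
qed

lemma clip_constant_bounds:
  fixes \<alpha> d :: real
  assumes "1 \<le> \<alpha>" "\<alpha> \<le> 2" "1 \<le> d"
  shows "2 * d \<le> 2 powr \<alpha> * d + 3 * (2/3) powr (\<alpha> - 1)"
    and "2 powr \<alpha> * d + 3 * (2/3) powr (\<alpha> - 1) \<le> 8 * d"
proof -
  have "2 \<le> (2::real) powr \<alpha>" "(2::real) powr \<alpha> \<le> 4"
    using powr_mono[of 1 \<alpha> 2] powr_mono[of \<alpha> 2 2] assms by simp_all
  moreover have "(2/3::real) powr (\<alpha> - 1) \<le> 1"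
    using assms by (intro powr_le1) auto
  moreover have "2 * d \<le> 2 powr \<alpha> * d" "2 powr \<alpha> * d \<le> 4 * d"
    using calculation(1,2) assms(3) by (intro mult_right_mono; simp)+
  moreover have "0 \<le> (2/3::real) powr (\<alpha> - 1)"
    by simp
  ultimately show "2 * d \<le> 2 powr \<alpha> * d + 3 * (2/3) powr (\<alpha> - 1)"
    and "2 powr \<alpha> * d + 3 * (2/3) powr (\<alpha> - 1) \<le> 8 * d"
    using assms(3) by linarith+
qed

theorem mainTheorem6:
  fixes M :: "'a measure" and G :: "'a \<Rightarrow> real^'n^'m"
    and Mbar :: "real^'n^'m" and \<alpha> \<sigma> \<tau> :: real
  assumes "prob_space M"
    and "G \<in> borel_measurable M"
    and "integrable M G" and "(\<integral>\<omega>. G \<omega> \<partial>M) = Mbar"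
    and "1 < \<alpha>" and "\<alpha> \<le> 2" and "\<sigma> > 0"
    and "(\<integral>\<^sup>+\<omega>. ennreal (fro_norm (G \<omega> - Mbar) powr \<alpha>) \<partial>M) \<le> ennreal (\<sigma> powr \<alpha>)"
    and "\<tau> > 0"
    and "fro_norm Mbar \<le> \<tau> / 2"
  shows "(\<integral>\<^sup>+\<omega>. ennreal ((fro_norm (spectral_clip \<tau> (G \<omega>)))\<^sup>2) \<partial>M)
           \<le> ennreal (2 * (fro_norm Mbar)\<^sup>2
              + (2 powr \<alpha> * real (min CARD('m) CARD('n)) + 3 * (2/3) powr (\<alpha> - 1))
                * \<tau> powr (2 - \<alpha>) * \<sigma> powr \<alpha>)
       \<and> 2 * (fro_norm Mbar)\<^sup>2
              + (2 powr \<alpha> * real (min CARD('m) CARD('n)) + 3 * (2/3) powr (\<alpha> - 1))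
                * \<tau> powr (2 - \<alpha>) * \<sigma> powr \<alpha>
         \<le> 2 * (fro_norm Mbar)\<^sup>2 + 8 * real (min CARD('m) CARD('n)) * \<tau> powr (2 - \<alpha>) * \<sigma> powr \<alpha>"
proof -
  interpret prob_space M by fact
  define d where "d = real (min CARD('m) CARD('n))"
  define K where "K = 2 powr \<alpha> * d + 3 * (2/3) powr (\<alpha> - 1)"
  have K: "2 * d \<le> K" "K \<le> 8 * d"
    using clip_constant_bounds[of \<alpha> d] assms(5,6) unfolding K_def d_def by simp_all
  have "(fro_norm (spectral_clip \<tau> (G \<omega>)))\<^sup>2
      \<le> 2 * (fro_norm Mbar)\<^sup>2 + (2 * d * \<tau> powr (2 - \<alpha>)) * fro_norm (G \<omega> - Mbar) powr \<alpha>" for \<omega>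
    using norm_spectral_clip_sq_le_powr[of \<tau> \<alpha> "G \<omega>" Mbar] assms(5,6,9)
    by (simp add: fro_norm_eq_norm d_def)
  then have "(\<integral>\<^sup>+\<omega>. ennreal ((fro_norm (spectral_clip \<tau> (G \<omega>)))\<^sup>2) \<partial>M)
      \<le> ennreal (2 * (fro_norm Mbar)\<^sup>2 + (2 * d * \<tau> powr (2 - \<alpha>)) * \<sigma> powr \<alpha>)"
    using assms(2,8) by (intro nn_integral_le_affine_bound) (simp_all add: fro_norm_eq_norm d_def)
  also have "\<dots> \<le> ennreal (2 * (fro_norm Mbar)\<^sup>2 + K * \<tau> powr (2 - \<alpha>) * \<sigma> powr \<alpha>)"
    using K by (intro ennreal_leI add_left_mono mult_right_mono) auto
  finally have "(\<integral>\<^sup>+\<omega>. ennreal ((fro_norm (spectral_clip \<tau> (G \<omega>)))\<^sup>2) \<partial>M)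
      \<le> ennreal (2 * (fro_norm Mbar)\<^sup>2 + K * \<tau> powr (2 - \<alpha>) * \<sigma> powr \<alpha>)" .
  moreover have "2 * (fro_norm Mbar)\<^sup>2 + K * \<tau> powr (2 - \<alpha>) * \<sigma> powr \<alpha>
      \<le> 2 * (fro_norm Mbar)\<^sup>2 + 8 * d * \<tau> powr (2 - \<alpha>) * \<sigma> powr \<alpha>"
    using K by (intro add_left_mono mult_right_mono) auto
  ultimately show ?thesis
    by (simp only: K_def d_def)
qed

end
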